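(* Let $(M,\phi,\xi,\eta,g)$ be a $(2n+1)$-dimensional Kenmotsu manifold whose metric $g$ is a conformal $\eta$-Einstein soliton, i.e. $$(\mathcal{L}_\xi g)(X,Y)+2S(X,Y)+\Big[2\lambda-r+\Big(p+\frac{2}{2n+1}\Big)\Big]g(X,Y)+2\mu\,\eta(X)\eta(Y)=0$$ for all vector fields $X,Y$ on $M$, where $\lambda,\mu$ are real constants. Then $M$ is $\eta$-Einstein and its scalar curvature is $r=\big(p+\frac{2}{2n+1}\big)-4n+2\lambda+2\mu$.
   Context: An almost contact metric manifold $(M,\phi,\xi,\eta,g)$ of dimension $2n+1$ consists of a $(1,1)$-tensor field $\phi$, a vector field $\xi$, a 1-form $\eta$ and a Riemannian metric $g$ with $\phi^2X=-X+\eta(X)\xi$, $\eta(\xi)=1$, $\eta\circ\phi=0$, $\phi\xi=0$, $g(\phi X,\phi Y)=g(X,Y)-\eta(X)\eta(Y)$, $g(X,\xi)=\eta(X)$. It is a Kenmotsu manifold if, with $\nabla$ the Levi-Civita connection of $g$, $(\nabla_X\phi)Y=-g(X,\phi Y)\xi-\eta(Y)\phi X$ and $\nabla_X\xi=X-\eta(X)\xi$ for all vector fields $X,Y$. $S$ denotes the Ricci tensor, $r$ the scalar curvature of $g$, $\mathcal{L}_\xi$ the Lie derivative along $\xi$, and $p$ is a scalar non-dynamical field (a time-dependent scalar field). A manifold is $\eta$-Einstein if $S=a\,g+b\,\eta\otimes\eta$ for some functions $a,b$. *)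

theory Defs
  imports "HOL-Analysis.Analysis"
begin

text \<open>Points of a chart domain U (an open subset of R^m, m = CARD('m)) are vectors
  x :: real^'m.  Tensor fields are given by their component functions:
  g x i j = g_ij, phi x k j = phi^k_j, xi x k = xi^k, eta x i = eta_i.
  Tangent vectors at x are v :: real^'m (components v^i).\<close>

definition pd :: "(real^'m \<Rightarrow> real) \<Rightarrow> 'm \<Rightarrow> real^'m \<Rightarrow> real" where
  "pd f i x = deriv (\<lambda>t. f (x + t *\<^sub>R axis i 1)) 0"

fun coord_Ck :: "nat \<Rightarrow> (real^'m) set \<Rightarrow> (real^'m \<Rightarrow> real) \<Rightarrow> bool" where
  "coord_Ck 0 U f = continuous_on U f"
| "coord_Ck (Suc k) U f = (f differentiable_on U \<and> (\<forall>i. coord_Ck k U (pd f i)))"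

definition coord_smooth :: "(real^'m) set \<Rightarrow> (real^'m \<Rightarrow> real) \<Rightarrow> bool" where
  "coord_smooth U f = (\<forall>k. coord_Ck k U f)"

definition bil :: "('m \<Rightarrow> 'm \<Rightarrow> real) \<Rightarrow> real^'m \<Rightarrow> real^'m \<Rightarrow> real" where
  "bil T v w = (\<Sum>i\<in>UNIV. \<Sum>j\<in>UNIV. T i j * v$i * w$j)"

definition form1 :: "('m \<Rightarrow> real) \<Rightarrow> real^'m \<Rightarrow> real" where
  "form1 e v = (\<Sum>i\<in>UNIV. e i * v$i)"

definition endo :: "('m \<Rightarrow> 'm \<Rightarrow> real) \<Rightarrow> real^'m \<Rightarrow> real^'m" where
  "endo A v = (\<chi> k. \<Sum>j\<in>UNIV. A k j * v$j)"

definition vecf :: "('m \<Rightarrow> real) \<Rightarrow> real^'m" where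
  "vecf X = (\<chi> k. X k)"

definition riem_metric :: "(real^'m) set \<Rightarrow> (real^'m \<Rightarrow> 'm \<Rightarrow> 'm \<Rightarrow> real) \<Rightarrow> bool" where
  "riem_metric U g = ((\<forall>i j. coord_smooth U (\<lambda>x. g x i j)) \<and>
     (\<forall>x\<in>U. (\<forall>i j. g x i j = g x j i) \<and> (\<forall>v. v \<noteq> 0 \<longrightarrow> bil (g x) v v > 0)))"

definition ginv :: "(real^'m \<Rightarrow> 'm \<Rightarrow> 'm \<Rightarrow> real) \<Rightarrow> real^'m \<Rightarrow> 'm \<Rightarrow> 'm \<Rightarrow> real" where
  "ginv g x k l = matrix_inv (\<chi> a b. g x a b) $ k $ l"

text \<open>Christoffel symbols of the Levi-Civita connection: christ g x k i j = Gamma^k_ij.\<close>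
definition christ :: "(real^'m \<Rightarrow> 'm \<Rightarrow> 'm \<Rightarrow> real) \<Rightarrow> real^'m \<Rightarrow> 'm \<Rightarrow> 'm \<Rightarrow> 'm \<Rightarrow> real" where
  "christ g x k i j = (1/2) * (\<Sum>l\<in>UNIV. ginv g x k l *
     (pd (\<lambda>y. g y j l) i x + pd (\<lambda>y. g y i l) j x - pd (\<lambda>y. g y i j) l x))"

text \<open>(\<nabla>_v phi) w, with (\<nabla>_i phi)^k_j = d_i phi^k_j + Gamma^k_il phi^l_j - Gamma^l_ij phi^k_l.\<close>
definition cov_phi :: "(real^'m \<Rightarrow> 'm \<Rightarrow> 'm \<Rightarrow> real) \<Rightarrow> (real^'m \<Rightarrow> 'm \<Rightarrow> 'm \<Rightarrow> real)
    \<Rightarrow> real^'m \<Rightarrow> real^'m \<Rightarrow> real^'m \<Rightarrow> real^'m" where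
  "cov_phi g phi x v w = (\<chi> k. \<Sum>i\<in>UNIV. \<Sum>j\<in>UNIV. v$i * w$j *
     (pd (\<lambda>y. phi y k j) i x + (\<Sum>l\<in>UNIV. christ g x k i l * phi x l j)
        - (\<Sum>l\<in>UNIV. christ g x l i j * phi x k l)))"

definition cov_vec :: "(real^'m \<Rightarrow> 'm \<Rightarrow> 'm \<Rightarrow> real) \<Rightarrow> (real^'m \<Rightarrow> 'm \<Rightarrow> real)
    \<Rightarrow> real^'m \<Rightarrow> real^'m \<Rightarrow> real^'m" where
  "cov_vec g X x v = (\<chi> k. \<Sum>i\<in>UNIV. v$i *
     (pd (\<lambda>y. X y k) i x + (\<Sum>l\<in>UNIV. christ g x k i l * X x l)))"

text \<open>Riemann tensor R(d_i,d_j)d_k = R^l_ijk d_l, with R(X,Y) = [\<nabla>_X,\<nabla>_Y] - \<nabla>_[X,Y].\<close>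
definition riemann :: "(real^'m \<Rightarrow> 'm \<Rightarrow> 'm \<Rightarrow> real) \<Rightarrow> real^'m \<Rightarrow> 'm \<Rightarrow> 'm \<Rightarrow> 'm \<Rightarrow> 'm \<Rightarrow> real" where
  "riemann g x l i j k = pd (\<lambda>y. christ g y l j k) i x - pd (\<lambda>y. christ g y l i k) j x
     + (\<Sum>m\<in>UNIV. christ g x l i m * christ g x m j k - christ g x l j m * christ g x m i k)"

text \<open>Ricci tensor S(Y,Z) = trace (X \<mapsto> R(X,Y)Z).\<close>
definition ricci :: "(real^'m \<Rightarrow> 'm \<Rightarrow> 'm \<Rightarrow> real) \<Rightarrow> real^'m \<Rightarrow> 'm \<Rightarrow> 'm \<Rightarrow> real" where
  "ricci g x j k = (\<Sum>i\<in>UNIV. riemann g x i i j k)"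

definition scal :: "(real^'m \<Rightarrow> 'm \<Rightarrow> 'm \<Rightarrow> real) \<Rightarrow> real^'m \<Rightarrow> real" where
  "scal g x = (\<Sum>j\<in>UNIV. \<Sum>k\<in>UNIV. ginv g x j k * ricci g x j k)"

definition lie_g :: "(real^'m \<Rightarrow> 'm \<Rightarrow> 'm \<Rightarrow> real) \<Rightarrow> (real^'m \<Rightarrow> 'm \<Rightarrow> real)
    \<Rightarrow> real^'m \<Rightarrow> 'm \<Rightarrow> 'm \<Rightarrow> real" where
  "lie_g g X x i j = (\<Sum>k\<in>UNIV. X x k * pd (\<lambda>y. g y i j) k x
     + g x k j * pd (\<lambda>y. X y k) i x + g x i k * pd (\<lambda>y. X y k) j x)"

definition almost_contact_metric ::
  "(real^'m) set \<Rightarrow> (real^'m \<Rightarrow> 'm \<Rightarrow> 'm \<Rightarrow> real) \<Rightarrow> (real^'m \<Rightarrow> 'm \<Rightarrow> real)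
   \<Rightarrow> (real^'m \<Rightarrow> 'm \<Rightarrow> real) \<Rightarrow> (real^'m \<Rightarrow> 'm \<Rightarrow> 'm \<Rightarrow> real) \<Rightarrow> bool" where
  "almost_contact_metric U phi xi eta g =
    (riem_metric U g \<and>
     (\<forall>k j. coord_smooth U (\<lambda>x. phi x k j)) \<and> (\<forall>k. coord_smooth U (\<lambda>x. xi x k)) \<and>
     (\<forall>k. coord_smooth U (\<lambda>x. eta x k)) \<and>
     (\<forall>x\<in>U.
        (\<forall>v. endo (phi x) (endo (phi x) v) = - v + form1 (eta x) v *\<^sub>R vecf (xi x)) \<and>
        form1 (eta x) (vecf (xi x)) = 1 \<and>
        (\<forall>v. form1 (eta x) (endo (phi x) v) = 0) \<and>
        endo (phi x) (vecf (xi x)) = 0 \<and>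
        (\<forall>v w. bil (g x) (endo (phi x) v) (endo (phi x) w) = bil (g x) v w - form1 (eta x) v * form1 (eta x) w) \<and>
        (\<forall>v. bil (g x) v (vecf (xi x)) = form1 (eta x) v)))"

definition kenmotsu ::
  "(real^'m) set \<Rightarrow> (real^'m \<Rightarrow> 'm \<Rightarrow> 'm \<Rightarrow> real) \<Rightarrow> (real^'m \<Rightarrow> 'm \<Rightarrow> real)
   \<Rightarrow> (real^'m \<Rightarrow> 'm \<Rightarrow> real) \<Rightarrow> (real^'m \<Rightarrow> 'm \<Rightarrow> 'm \<Rightarrow> real) \<Rightarrow> bool" where
  "kenmotsu U phi xi eta g =
    (almost_contact_metric U phi xi eta g \<and>
     (\<forall>x\<in>U. \<forall>v w.
        cov_phi g phi x v w = (- bil (g x) v (endo (phi x) w)) *\<^sub>R vecf (xi x) - form1 (eta x) w *\<^sub>R endo (phi x) v) \<and>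
     (\<forall>x\<in>U. \<forall>v. cov_vec g xi x v = v - form1 (eta x) v *\<^sub>R vecf (xi x)))"

definition eta_einstein :: "(real^'m) set \<Rightarrow> (real^'m \<Rightarrow> 'm \<Rightarrow> real) \<Rightarrow> (real^'m \<Rightarrow> 'm \<Rightarrow> 'm \<Rightarrow> real) \<Rightarrow> bool" where
  "eta_einstein U eta g = (\<exists>a b :: real^'m \<Rightarrow> real. \<forall>x\<in>U. \<forall>v w.
      bil (ricci g x) v w = a x * bil (g x) v w + b x * form1 (eta x) v * form1 (eta x) w)"

end

theory Submission
  imports Defs
begin

text \<open>Everything follows from the Kenmotsu condition \<open>\<nabla>\<xi> = I - \<eta> \<otimes> \<xi>\<close>.
  As the Levi-Civita connection is metric,
  \<open>(L\<^sub>\<xi> g)(X,Y) = g(\<nabla>\<^sub>X\<xi>, Y) + g(X, \<nabla>\<^sub>Y\<xi>) = 2 g(X,Y) - 2 \<eta>(X) \<eta>(Y)\<close>,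
  so the soliton equation expresses \<open>S\<close> as a combination of \<open>g\<close> and \<open>\<eta> \<otimes> \<eta>\<close>.
  As it is moreover torsion free and mixed partial derivatives commute, the Ricci identity
  \<open>R(X,Y)\<xi> = \<nabla>\<^sub>X\<nabla>\<^sub>Y\<xi> - \<nabla>\<^sub>Y\<nabla>\<^sub>X\<xi> - \<nabla>\<^bsub>[X,Y]\<^esub>\<xi>\<close> gives
  \<open>R(X,Y)\<xi> = \<eta>(X) Y - \<eta>(Y) X - d\<eta>(X,Y) \<xi>\<close>. The antisymmetric \<open>d\<eta>\<close> term drops out of the
  trace, so \<open>S(\<xi>,\<xi>) = 1 - (2n+1)\<close>, and the soliton equation at \<open>(\<xi>,\<xi>)\<close> yields \<open>r\<close>.\<close>

lemma has_real_derivative_along_line: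
  fixes f :: "'a::real_normed_vector \<Rightarrow> real"
  assumes "(f has_derivative f') (at (y + s *\<^sub>R a))"
  shows "((\<lambda>t. f (y + t *\<^sub>R a)) has_real_derivative f' a) (at s)"
proof -
  have l: "((\<lambda>t. y + t *\<^sub>R a) has_derivative (\<lambda>t. t *\<^sub>R a)) (at s)"
    by (auto intro!: derivative_eq_intros)
  have "((f \<circ> (\<lambda>t. y + t *\<^sub>R a)) has_derivative (f' \<circ> (\<lambda>t. t *\<^sub>R a))) (at s)"
    by (rule diff_chain_at[OF l]) (use assms in simp)
  moreover have "linear f'" using assms has_derivative_linear by blast
  then have "(f' \<circ> (\<lambda>t. t *\<^sub>R a)) = (\<lambda>t. f' a * t)"
    by (auto simp: linear_scale o_def)
  ultimately show ?thesis by (simp add: has_field_derivative_def o_def)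
qed

lemma pd_eq_derivative:
  fixes f :: "real^'m \<Rightarrow> real"
  assumes "(f has_derivative f') (at x)"
  shows "pd f i x = f' (axis i 1)"
proof -
  have "((\<lambda>t. f (x + t *\<^sub>R axis i 1)) has_real_derivative f' (axis i 1)) (at 0)"
    by (rule has_real_derivative_along_line) (use assms in simp)
  then show ?thesis unfolding pd_def by (rule DERIV_imp_deriv)
qed

lemma has_real_derivative_pd_along_axis:
  fixes f :: "real^'m \<Rightarrow> real"
  assumes "f differentiable (at (y + s *\<^sub>R axis i 1))"
  shows "((\<lambda>t. f (y + t *\<^sub>R axis i 1)) has_real_derivative pd f i (y + s *\<^sub>R axis i 1)) (at s)"
proof -
  obtain f' where f': "(f has_derivative f') (at (y + s *\<^sub>R axis i 1))"
    using assms unfolding differentiable_def by blast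
  show ?thesis using has_real_derivative_along_line[OF f'] pd_eq_derivative[OF f'] by simp
qed

lemma pd_cong_open:
  fixes f h :: "real^'m \<Rightarrow> real"
  assumes "open U" "x \<in> U" "\<And>y. y \<in> U \<Longrightarrow> f y = h y"
  shows "pd f i x = pd h i x"
proof -
  have "open ((\<lambda>t::real. x + t *\<^sub>R axis i 1) -` U)"
    by (rule open_vimage[OF assms(1)]) (intro continuous_intros)
  moreover have "0 \<in> (\<lambda>t::real. x + t *\<^sub>R axis i 1) -` U" using assms(2) by simp
  ultimately have ev: "eventually (\<lambda>t. t \<in> (\<lambda>t::real. x + t *\<^sub>R axis i 1) -` U) (nhds 0)"
    by (rule eventually_nhds_in_open)
  have "eventually (\<lambda>t. f (x + t *\<^sub>R axis i 1) = h (x + t *\<^sub>R axis i 1)) (nhds 0)"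
    by (rule eventually_mono[OF ev]) (use assms(3) in auto)
  then show ?thesis unfolding pd_def by (rule deriv_cong_ev) simp
qed

lemma pd_mult:
  fixes f h :: "real^'m \<Rightarrow> real"
  assumes "f differentiable (at x)" "h differentiable (at x)"
  shows "pd (\<lambda>y. f y * h y) i x = pd f i x * h x + f x * pd h i x"
proof -
  obtain f' h' where f': "(f has_derivative f') (at x)" and h': "(h has_derivative h') (at x)"
    using assms unfolding differentiable_def by blast
  have "((\<lambda>y. f y * h y) has_derivative (\<lambda>v. f x * h' v + f' v * h x)) (at x)"
    by (rule has_derivative_mult[OF f' h'])
  from pd_eq_derivative[OF this] pd_eq_derivative[OF f'] pd_eq_derivative[OF h'] show ?thesis by simp
qed

lemma pd_sum:
  fixes f :: "'k \<Rightarrow> real^'m \<Rightarrow> real"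
  assumes "finite S" "\<And>k. k \<in> S \<Longrightarrow> f k differentiable (at x)"
  shows "pd (\<lambda>y. \<Sum>k\<in>S. f k y) i x = (\<Sum>k\<in>S. pd (f k) i x)"
proof -
  have "\<forall>k\<in>S. \<exists>f'. (f k has_derivative f') (at x)"
    using assms(2) unfolding differentiable_def by blast
  then obtain F where F: "\<And>k. k \<in> S \<Longrightarrow> (f k has_derivative F k) (at x)" by metis
  have "((\<lambda>y. \<Sum>k\<in>S. f k y) has_derivative (\<lambda>v. \<Sum>k\<in>S. F k v)) (at x)"
    by (rule has_derivative_sum) (use F in auto)
  from pd_eq_derivative[OF this] show ?thesis using pd_eq_derivative[OF F] by simp
qed

lemma pd_add:
  fixes f h :: "real^'m \<Rightarrow> real"
  assumes "f differentiable (at x)" "h differentiable (at x)"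
  shows "pd (\<lambda>y. f y + h y) i x = pd f i x + pd h i x"
proof -
  obtain f' h' where f': "(f has_derivative f') (at x)" and h': "(h has_derivative h') (at x)"
    using assms unfolding differentiable_def by blast
  from pd_eq_derivative[OF has_derivative_add[OF f' h']] pd_eq_derivative[OF f'] pd_eq_derivative[OF h']
  show ?thesis by simp
qed

lemma pd_diff:
  fixes f h :: "real^'m \<Rightarrow> real"
  assumes "f differentiable (at x)" "h differentiable (at x)"
  shows "pd (\<lambda>y. f y - h y) i x = pd f i x - pd h i x"
proof -
  obtain f' h' where f': "(f has_derivative f') (at x)" and h': "(h has_derivative h') (at x)"
    using assms unfolding differentiable_def by blast
  from pd_eq_derivative[OF has_derivative_diff[OF f' h']] pd_eq_derivative[OF f'] pd_eq_derivative[OF h']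
  show ?thesis by simp
qed

lemma pd_const: "pd (\<lambda>y::real^'m. c) i x = 0"
proof -
  have "((\<lambda>y::real^'m. c) has_derivative (\<lambda>v. 0)) (at x)" by simp
  from pd_eq_derivative[OF this] show ?thesis by simp
qed

section \<open>Symmetry of second partial derivatives\<close>

lemma dist_axis_steps_le:
  fixes x :: "real^'m"
  assumes "0 \<le> s" "0 \<le> t"
  shows "dist (x + s *\<^sub>R axis i 1 + t *\<^sub>R axis j 1) x \<le> s + t"
proof -
  have "dist (x + s *\<^sub>R axis i 1 + t *\<^sub>R axis j 1) x = norm (s *\<^sub>R axis i 1 + t *\<^sub>R (axis j 1 :: real^'m))"
    by (simp add: dist_norm add.assoc)
  also have "\<dots> \<le> norm (s *\<^sub>R (axis i 1 :: real^'m)) + norm (t *\<^sub>R (axis j 1 :: real^'m))"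
    by (rule norm_triangle_ineq)
  also have "\<dots> = s + t"
    using assms by simp
  finally show ?thesis .
qed

lemma second_difference_mvt:
  fixes f :: "real^'m \<Rightarrow> real"
  assumes U: "open U" and B: "ball x r \<subseteq> U" and h: "0 < h" "2 * h < r"
    and fd: "f differentiable_on U" and fid: "pd f i differentiable_on U"
  obtains s t where "0 < s" "s < h" "0 < t" "t < h"
    "f (x + h *\<^sub>R axis i 1 + h *\<^sub>R axis j 1) - f (x + h *\<^sub>R axis i 1) - f (x + h *\<^sub>R axis j 1) + f x
       = h * h * pd (pd f i) j (x + s *\<^sub>R axis i 1 + t *\<^sub>R axis j 1)"
proof -
  define a :: "real^'m" where "a = axis i 1"
  define b :: "real^'m" where "b = axis j 1"
  have inU: "x + s *\<^sub>R a + t *\<^sub>R b \<in> U" if "0 \<le> s" "s \<le> h" "0 \<le> t" "t \<le> h" for s t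
  proof -
    have "dist (x + s *\<^sub>R a + t *\<^sub>R b) x < r"
      using dist_axis_steps_le[of s t x i j] that h unfolding a_def b_def by linarith
    then show ?thesis using B by (auto simp: dist_commute)
  qed
  have fda: "f differentiable (at z)" if "z \<in> U" for z
    using fd U that differentiable_on_eq_differentiable_at by blast
  have fida: "pd f i differentiable (at z)" if "z \<in> U" for z
    using fid U that differentiable_on_eq_differentiable_at by blast
  define \<phi> where "\<phi> s = f ((x + h *\<^sub>R b) + s *\<^sub>R a) - f (x + s *\<^sub>R a)" for s
  have "DERIV \<phi> s :> pd f i ((x + h *\<^sub>R b) + s *\<^sub>R a) - pd f i (x + s *\<^sub>R a)"
    if "0 \<le> s" "s \<le> h" for s
    unfolding \<phi>_def a_def
  proof (rule DERIV_diff)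
    show "((\<lambda>s. f (x + h *\<^sub>R b + s *\<^sub>R axis i 1)) has_real_derivative pd f i (x + h *\<^sub>R b + s *\<^sub>R axis i 1)) (at s)"
      by (rule has_real_derivative_pd_along_axis, rule fda)
        (use inU[of s h] that h in \<open>simp add: a_def algebra_simps\<close>)
    show "((\<lambda>s. f (x + s *\<^sub>R axis i 1)) has_real_derivative pd f i (x + s *\<^sub>R axis i 1)) (at s)"
      by (rule has_real_derivative_pd_along_axis, rule fda)
        (use inU[of s 0] that h in \<open>simp add: a_def algebra_simps\<close>)
  qed
  from MVT2[OF h(1) this] obtain s where s: "0 < s" "s < h"
    "\<phi> h - \<phi> 0 = h * (pd f i ((x + h *\<^sub>R b) + s *\<^sub>R a) - pd f i (x + s *\<^sub>R a))"
    by auto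
  define \<psi> where "\<psi> t = pd f i ((x + s *\<^sub>R a) + t *\<^sub>R b)" for t
  have "DERIV \<psi> t :> pd (pd f i) j ((x + s *\<^sub>R a) + t *\<^sub>R b)" if "0 \<le> t" "t \<le> h" for t
    unfolding \<psi>_def b_def
    by (rule has_real_derivative_pd_along_axis, rule fida) (use inU[of s t] that s in \<open>simp add: b_def\<close>)
  from MVT2[OF h(1) this] obtain t where t: "0 < t" "t < h"
    "\<psi> h - \<psi> 0 = h * pd (pd f i) j ((x + s *\<^sub>R a) + t *\<^sub>R b)"
    by auto
  have "f (x + h *\<^sub>R a + h *\<^sub>R b) - f (x + h *\<^sub>R a) - f (x + h *\<^sub>R b) + f x = \<phi> h - \<phi> 0"
    unfolding \<phi>_def by (simp add: algebra_simps)
  also have "\<dots> = h * (\<psi> h - \<psi> 0)"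
    using s(3) unfolding \<psi>_def by (simp add: algebra_simps)
  also have "\<dots> = h * h * pd (pd f i) j (x + s *\<^sub>R a + t *\<^sub>R b)"
    using t(3) by simp
  finally show ?thesis using that s t unfolding a_def b_def by blast
qed

text \<open>Both mixed partials are limits of the same second difference quotient.\<close>

lemma pd_pd_commute:
  fixes f :: "real^'m \<Rightarrow> real"
  assumes U: "open U" "x \<in> U"
    and fd: "f differentiable_on U" and fid: "pd f i differentiable_on U" and fjd: "pd f j differentiable_on U"
    and c1: "continuous_on U (pd (pd f i) j)" and c2: "continuous_on U (pd (pd f j) i)"
  shows "pd (pd f i) j x = pd (pd f j) i x"
proof (rule ccontr)
  assume "pd (pd f i) j x \<noteq> pd (pd f j) i x"
  then have e: "\<bar>pd (pd f i) j x - pd (pd f j) i x\<bar> / 2 > 0" (is "?e > 0")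
    by simp
  obtain r where r: "r > 0" "ball x r \<subseteq> U"
    using U open_contains_ball by blast
  have "isCont (pd (pd f i) j) x"
    using c1 U continuous_on_eq_continuous_at by blast
  then obtain d1 where d1: "d1 > 0" "\<And>y. dist y x < d1 \<Longrightarrow> dist (pd (pd f i) j y) (pd (pd f i) j x) < ?e"
    using e unfolding continuous_at_eps_delta by blast
  have "isCont (pd (pd f j) i) x"
    using c2 U continuous_on_eq_continuous_at by blast
  then obtain d2 where d2: "d2 > 0" "\<And>y. dist y x < d2 \<Longrightarrow> dist (pd (pd f j) i y) (pd (pd f j) i x) < ?e"
    using e unfolding continuous_at_eps_delta by blast
  define h where "h = min r (min d1 d2) / 4"
  have h: "0 < h" "2 * h < r" "2 * h < d1" "2 * h < d2"
    using r d1 d2 by (auto simp: h_def)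
  obtain s t where st: "0 < s" "s < h" "0 < t" "t < h" and
    A: "f (x + h *\<^sub>R axis i 1 + h *\<^sub>R axis j 1) - f (x + h *\<^sub>R axis i 1) - f (x + h *\<^sub>R axis j 1) + f x
       = h * h * pd (pd f i) j (x + s *\<^sub>R axis i 1 + t *\<^sub>R axis j 1)"
    using second_difference_mvt[OF U(1) r(2) h(1) h(2) fd fid] by blast
  obtain s' t' where st': "0 < s'" "s' < h" "0 < t'" "t' < h" and
    B: "f (x + h *\<^sub>R axis j 1 + h *\<^sub>R axis i 1) - f (x + h *\<^sub>R axis j 1) - f (x + h *\<^sub>R axis i 1) + f x
       = h * h * pd (pd f j) i (x + s' *\<^sub>R axis j 1 + t' *\<^sub>R axis i 1)"
    using second_difference_mvt[OF U(1) r(2) h(1) h(2) fd fjd] by blast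
  have "x + h *\<^sub>R axis j 1 + h *\<^sub>R axis i 1 = x + h *\<^sub>R axis i 1 + h *\<^sub>R axis j 1"
    by (simp add: algebra_simps)
  with A B have "h * h * pd (pd f i) j (x + s *\<^sub>R axis i 1 + t *\<^sub>R axis j 1)
      = h * h * pd (pd f j) i (x + s' *\<^sub>R axis j 1 + t' *\<^sub>R axis i 1)"
    by (simp add: algebra_simps)
  then have eq: "pd (pd f i) j (x + s *\<^sub>R axis i 1 + t *\<^sub>R axis j 1)
      = pd (pd f j) i (x + s' *\<^sub>R axis j 1 + t' *\<^sub>R axis i 1)"
    using h(1) by simp
  have "dist (pd (pd f i) j (x + s *\<^sub>R axis i 1 + t *\<^sub>R axis j 1)) (pd (pd f i) j x) < ?e"
    using d1(2) dist_axis_steps_le[of s t x i j] st h by force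
  moreover have "dist (pd (pd f j) i (x + s' *\<^sub>R axis j 1 + t' *\<^sub>R axis i 1)) (pd (pd f j) i x) < ?e"
    using d2(2) dist_axis_steps_le[of s' t' x j i] st' h by force
  ultimately show False
    unfolding eq dist_real_def by (auto simp: abs_if split: if_splits)
qed

lemma coord_smooth_pd: "coord_smooth U f \<Longrightarrow> coord_smooth U (pd f i)"
  unfolding coord_smooth_def by (metis coord_Ck.simps(2))

lemma coord_smooth_differentiable_on: "coord_smooth U f \<Longrightarrow> f differentiable_on U"
  unfolding coord_smooth_def by (metis coord_Ck.simps(2))

lemma coord_smooth_continuous_on: "coord_smooth U f \<Longrightarrow> continuous_on U f"
  unfolding coord_smooth_def by (metis coord_Ck.simps(1))

lemma coord_smooth_differentiable_at:
  "coord_smooth U f \<Longrightarrow> open U \<Longrightarrow> x \<in> U \<Longrightarrow> f differentiable (at x)"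
  using coord_smooth_differentiable_on differentiable_on_eq_differentiable_at by blast

lemma coord_smooth_pd_pd_commute:
  assumes "coord_smooth U f" "open U" "x \<in> U"
  shows "pd (pd f i) j x = pd (pd f j) i x"
  using assms
  by (intro pd_pd_commute coord_smooth_differentiable_on coord_smooth_continuous_on coord_smooth_pd)

section \<open>The inverse metric and the Christoffel symbols\<close>

lemma differentiable_prod:
  fixes f :: "'k \<Rightarrow> 'a::real_normed_vector \<Rightarrow> real"
  assumes "\<And>k. k \<in> S \<Longrightarrow> f k differentiable (at x)"
  shows "(\<lambda>y. \<Prod>k\<in>S. f k y) differentiable (at x)"
proof -
  have "\<forall>k\<in>S. \<exists>f'. (f k has_derivative f') (at x)"
    using assms unfolding differentiable_def by blast
  then obtain F where F: "\<And>k. k \<in> S \<Longrightarrow> (f k has_derivative F k) (at x)" by metis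
  show ?thesis unfolding differentiable_def by (rule exI, rule has_derivative_prod) (use F in auto)
qed

lemma differentiable_det:
  fixes F :: "'a::real_normed_vector \<Rightarrow> 'n::finite \<Rightarrow> 'n \<Rightarrow> real"
  assumes "\<And>a b. (\<lambda>y. F y a b) differentiable (at x)"
  shows "(\<lambda>y. det (\<chi> a b. F y a b)) differentiable (at x)"
  unfolding det_def
  by (auto intro!: differentiable_sum differentiable_mult differentiable_prod assms simp: finite_permutations)

lemma invertible_if_posdef:
  fixes A :: "real^'n^'n"
  assumes "\<forall>v. v \<noteq> 0 \<longrightarrow> bil (\<lambda>i j. A$i$j) v v > 0"
  shows "invertible A"
proof -
  have "\<forall>v. A *v v = 0 \<longrightarrow> v = 0"
  proof (intro allI impI)
    fix v assume Av: "A *v v = 0"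
    have "bil (\<lambda>i j. A$i$j) v v = (\<Sum>i\<in>UNIV. v$i * (A *v v)$i)"
      unfolding bil_def matrix_vector_mult_def by (simp add: sum_distrib_left algebra_simps)
    also have "\<dots> = 0" using Av by simp
    finally show "v = 0" using assms by force
  qed
  then show ?thesis using invertible_left_inverse matrix_left_invertible_ker by blast
qed

lemma matrix_inv_right:
  fixes A :: "'a::semiring_1^'n^'n"
  assumes "invertible A"
  shows "A ** matrix_inv A = mat 1"
  using assms unfolding invertible_def matrix_inv_def
  by (rule someI_ex[where P="\<lambda>A'. A ** A' = mat 1 \<and> A' ** A = mat 1", THEN conjunct1])

lemma invertible_metric:
  fixes g :: "real^'m \<Rightarrow> 'm \<Rightarrow> 'm \<Rightarrow> real"
  assumes "riem_metric U g" "x \<in> U"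
  shows "invertible (\<chi> a b. g x a b)"
  by (rule invertible_if_posdef) (use assms in \<open>simp add: riem_metric_def\<close>)

lemma mult_delta_right [simp]: "(a::real) * (if P then 1 else 0) = (if P then a else 0)"
  by simp

lemma mult_delta_left [simp]: "(if P then 1 else 0) * (a::real) = (if P then a else 0)"
  by simp

lemma metric_ginv_right:
  fixes g :: "real^'m \<Rightarrow> 'm \<Rightarrow> 'm \<Rightarrow> real"
  assumes "riem_metric U g" "x \<in> U"
  shows "(\<Sum>k\<in>UNIV. g x j k * ginv g x k l) = (if j = l then 1 else 0)"
proof -
  have "(\<chi> a b. g x a b) ** matrix_inv (\<chi> a b. g x a b) = mat 1"
    by (rule matrix_inv_right[OF invertible_metric[OF assms]])
  then have "((\<chi> a b. g x a b) ** matrix_inv (\<chi> a b. g x a b)) $ j $ l = mat 1 $ j $ l" by simp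
  then show ?thesis unfolding ginv_def matrix_matrix_mult_def mat_def by simp
qed

lemma ginv_cramer:
  fixes g :: "real^'m \<Rightarrow> 'm \<Rightarrow> 'm \<Rightarrow> real"
  assumes "riem_metric U g" "x \<in> U"
  shows "ginv g x k l = det (\<chi> a b. if b = k then (axis l 1 :: real^'m) $ a else g x a b)
    / det (\<chi> a b. g x a b :: real^'m^'m)"
proof -
  let ?A = "(\<chi> a b. g x a b) :: real^'m^'m"
  let ?c = "\<chi> k. matrix_inv ?A $ k $ l"
  have inv: "invertible ?A"
    by (rule invertible_metric[OF assms])
  then have d: "det ?A \<noteq> 0"
    by (simp add: invertible_det_nz)
  have "?A *v ?c = axis l 1"
    using matrix_inv_right[OF inv]
    by (simp add: vec_eq_iff matrix_vector_mult_def matrix_matrix_mult_def mat_def axis_def)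
  then have "?c = (\<chi> k. det (\<chi> i j. if j = k then (axis l 1 :: real^'m) $ i else ?A $ i $ j) / det ?A)"
    using cramer[OF d] by blast
  then have "?c $ k = (\<chi> k. det (\<chi> i j. if j = k then (axis l 1 :: real^'m) $ i else ?A $ i $ j) / det ?A) $ k"
    by (rule arg_cong)
  moreover have A: "?A $ i $ j = g x i j" for i j
    by simp
  ultimately show ?thesis
    unfolding ginv_def by (simp only: A vec_lambda_beta)
qed

lemma differentiable_ginv:
  fixes g :: "real^'m \<Rightarrow> 'm \<Rightarrow> 'm \<Rightarrow> real"
  assumes "riem_metric U g" "open U" "x \<in> U"
  shows "(\<lambda>y. ginv g y k l) differentiable (at x)"
proof -
  define N where "N y = det (\<chi> a b. if b = k then (axis l 1 :: real^'m) $ a else g y a b)" for y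
  define D where "D y = det (\<chi> a b. g y a b :: real^'m^'m)" for y
  have gd: "(\<lambda>y. g y a b) differentiable (at x)" for a b
    using assms by (auto simp: riem_metric_def intro: coord_smooth_differentiable_at)
  have "(\<lambda>y. N y / D y) differentiable (at x)"
  proof (rule differentiable_divide)
    show "N differentiable (at x)"
      unfolding N_def
    proof (rule differentiable_det)
      fix a b
      show "(\<lambda>y. if b = k then (axis l 1 :: real^'m) $ a else g y a b) differentiable (at x)"
        by (cases "b = k") (simp_all add: gd)
    qed
    show "D differentiable (at x)"
      unfolding D_def by (rule differentiable_det) (rule gd)
    show "D x \<noteq> 0"
      using invertible_metric[OF assms(1,3)] by (simp add: D_def invertible_det_nz)
  qed
  then obtain D' where "((\<lambda>y. N y / D y) has_derivative D') (at x)"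
    unfolding differentiable_def by blast
  then have "((\<lambda>y. ginv g y k l) has_derivative D') (at x)"
    by (rule has_derivative_transform_within_open[OF _ assms(2,3)])
      (simp add: ginv_cramer[OF assms(1)] N_def D_def)
  then show ?thesis
    unfolding differentiable_def by blast
qed

lemma differentiable_christ:
  fixes g :: "real^'m \<Rightarrow> 'm \<Rightarrow> 'm \<Rightarrow> real"
  assumes "riem_metric U g" "open U" "x \<in> U"
  shows "(\<lambda>y. christ g y k i j) differentiable (at x)"
proof -
  have pgd: "pd (\<lambda>y. g y a b) c differentiable (at x)" for a b c
    using assms by (auto simp: riem_metric_def intro: coord_smooth_differentiable_at coord_smooth_pd)
  show ?thesis unfolding christ_def
    by (intro differentiable_mult differentiable_const differentiable_sum finite_class.finite_UNIV ballI
          differentiable_ginv[OF assms] differentiable_add differentiable_diff pgd)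
qed

lemma riem_metric_sym:
  assumes "riem_metric U g" "x \<in> U"
  shows "g x i j = g x j i"
  using assms by (simp add: riem_metric_def)

lemma pd_metric_sym:
  assumes "riem_metric U g" "open U" "x \<in> U"
  shows "pd (\<lambda>y. g y i j) k x = pd (\<lambda>y. g y j i) k x"
  by (rule pd_cong_open[OF assms(2,3)]) (use assms(1) riem_metric_sym in blast)

lemma christ_sym:
  assumes "riem_metric U g" "open U" "x \<in> U"
  shows "christ g x k i j = christ g x k j i"
  unfolding christ_def using pd_metric_sym[OF assms, of i j] by (simp add: algebra_simps)

lemma metric_christ:
  assumes "riem_metric U g" "x \<in> U"
  shows "(\<Sum>k\<in>UNIV. g x j k * christ g x k i m) =
     (1/2) * (pd (\<lambda>y. g y m j) i x + pd (\<lambda>y. g y i j) m x - pd (\<lambda>y. g y i m) j x)"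
proof -
  define T where "T l = pd (\<lambda>y. g y m l) i x + pd (\<lambda>y. g y i l) m x - pd (\<lambda>y. g y i m) l x" for l
  have "(\<Sum>k\<in>UNIV. g x j k * christ g x k i m) = (\<Sum>k\<in>UNIV. \<Sum>l\<in>UNIV. (1/2) * (g x j k * ginv g x k l * T l))"
    unfolding christ_def T_def by (simp add: sum_distrib_left algebra_simps)
  also have "\<dots> = (1/2) * (\<Sum>l\<in>UNIV. (\<Sum>k\<in>UNIV. g x j k * ginv g x k l) * T l)"
    by (subst sum.swap) (simp add: sum_distrib_left sum_distrib_right algebra_simps)
  also have "\<dots> = (1/2) * T j"
    by (simp add: metric_ginv_right[OF assms])
  finally show ?thesis by (simp add: T_def)
qed

lemma bil_axis: "bil T (axis j 1) w = (\<Sum>b\<in>UNIV. T j b * w$b)"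
proof -
  have "bil T (axis j 1) w = (\<Sum>i\<in>UNIV. (if i = j then 1 else 0) * (\<Sum>b\<in>UNIV. T i b * w$b))"
    unfolding bil_def axis_def by (simp add: sum_distrib_left algebra_simps)
  then show ?thesis by simp
qed

lemma form1_axis: "form1 e (axis i 1) = e i"
  unfolding form1_def axis_def by simp

lemma bil_lincomb_outer:
  "bil (\<lambda>i j. a * T i j - b * (e i * e j)) v w = a * bil T v w - b * (form1 e v * form1 e w)"
proof -
  have "form1 e v * form1 e w = (\<Sum>i\<in>UNIV. \<Sum>j\<in>UNIV. e i * e j * v$i * w$j)"
    unfolding form1_def sum_product by (simp add: mult_ac)
  then show ?thesis
    unfolding bil_def by (simp add: left_diff_distrib right_diff_distrib sum_subtractf sum_distrib_left mult_ac)
qed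

lemma sum_antisym_quadratic:
  fixes A :: "'a \<Rightarrow> 'a \<Rightarrow> real"
  shows "(\<Sum>i\<in>S. \<Sum>j\<in>S. (A i j - A j i) * u i * u j) = 0"
proof -
  have "(\<Sum>i\<in>S. \<Sum>j\<in>S. A j i * u i * u j) = (\<Sum>i\<in>S. \<Sum>j\<in>S. A i j * u i * u j)"
    by (subst sum.swap) (simp add: ac_simps)
  then show ?thesis by (simp add: left_diff_distrib sum_subtractf)
qed

definition cov_comp :: "(real^'m \<Rightarrow> 'm \<Rightarrow> 'm \<Rightarrow> real) \<Rightarrow> (real^'m \<Rightarrow> 'm \<Rightarrow> real)
    \<Rightarrow> real^'m \<Rightarrow> 'm \<Rightarrow> 'm \<Rightarrow> real" where
  "cov_comp g X y i k = pd (\<lambda>y. X y k) i y + (\<Sum>l\<in>UNIV. christ g y k i l * X y l)"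

lemma cov_vec_axis: "cov_vec g X x (axis i 1) $ k = cov_comp g X x i k"
  unfolding cov_vec_def cov_comp_def axis_def by simp

lemma metric_cov_comp:
  assumes g: "riem_metric U g" and x: "x \<in> U"
  shows "(\<Sum>k\<in>UNIV. g x k j * cov_comp g X x i k) = (\<Sum>k\<in>UNIV. g x k j * pd (\<lambda>y. X y k) i x)
    + (\<Sum>m\<in>UNIV. X x m * ((1/2) * (pd (\<lambda>y. g y m j) i x + pd (\<lambda>y. g y i j) m x - pd (\<lambda>y. g y i m) j x)))"
proof -
  have "(\<Sum>k\<in>UNIV. \<Sum>m\<in>UNIV. g x k j * (christ g x k i m * X x m))
      = (\<Sum>m\<in>UNIV. X x m * (\<Sum>k\<in>UNIV. g x j k * christ g x k i m))"
    by (subst sum.swap) (simp add: riem_metric_sym[OF g x, of _ j] sum_distrib_left algebra_simps)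
  then show ?thesis
    unfolding cov_comp_def metric_christ[OF g x] by (simp add: sum.distrib distrib_left sum_distrib_left)
qed

lemma lie_g_cov_comp:
  assumes g: "riem_metric U g" and U: "open U" "x \<in> U"
  shows "lie_g g X x i j = (\<Sum>k\<in>UNIV. g x k j * cov_comp g X x i k + g x i k * cov_comp g X x j k)"
proof -
  have sym_sum: "(\<Sum>m\<in>UNIV. X x m * ((1/2) * (pd (\<lambda>y. g y m j) i x + pd (\<lambda>y. g y i j) m x - pd (\<lambda>y. g y i m) j x)
        + (1/2) * (pd (\<lambda>y. g y m i) j x + pd (\<lambda>y. g y j i) m x - pd (\<lambda>y. g y j m) i x)))
      = (\<Sum>m\<in>UNIV. X x m * pd (\<lambda>y. g y i j) m x)"
    using pd_metric_sym[OF assms] by (simp add: algebra_simps)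
  have "(\<Sum>k\<in>UNIV. g x k j * cov_comp g X x i k + g x i k * cov_comp g X x j k)
      = (\<Sum>k\<in>UNIV. g x k j * cov_comp g X x i k) + (\<Sum>k\<in>UNIV. g x k i * cov_comp g X x j k)"
    by (simp add: sum.distrib riem_metric_sym[OF g U(2), of i])
  also have "\<dots> = (\<Sum>k\<in>UNIV. g x k j * pd (\<lambda>y. X y k) i x) + (\<Sum>k\<in>UNIV. g x k i * pd (\<lambda>y. X y k) j x)
      + (\<Sum>m\<in>UNIV. X x m * ((1/2) * (pd (\<lambda>y. g y m j) i x + pd (\<lambda>y. g y i j) m x - pd (\<lambda>y. g y i m) j x)
        + (1/2) * (pd (\<lambda>y. g y m i) j x + pd (\<lambda>y. g y j i) m x - pd (\<lambda>y. g y j m) i x)))"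
    unfolding metric_cov_comp[OF g U(2)] by (simp add: distrib_left sum.distrib)
  also have "\<dots> = lie_g g X x i j"
    unfolding sym_sum lie_g_def sum.distrib by (simp add: riem_metric_sym[OF g U(2), of i])
  finally show ?thesis by (rule sym)
qed

lemma pd_cov_comp:
  assumes g: "riem_metric U g" and U: "open U" "x \<in> U" and X: "\<And>k. coord_smooth U (\<lambda>y. X y k)"
  shows "pd (\<lambda>y. cov_comp g X y j l) i x = pd (pd (\<lambda>y. X y l) j) i x
     + (\<Sum>m\<in>UNIV. pd (\<lambda>y. christ g y l j m) i x * X x m + christ g x l j m * pd (\<lambda>y. X y m) i x)"
proof -
  have Xd: "(\<lambda>y. X y k) differentiable (at x)" for k
    using X U by (rule coord_smooth_differentiable_at)
  have Gd: "(\<lambda>y. christ g y a b c) differentiable (at x)" for a b c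
    using g U by (rule differentiable_christ)
  have "pd (\<lambda>y. cov_comp g X y j l) i x
      = pd (pd (\<lambda>y. X y l) j) i x + pd (\<lambda>y. \<Sum>m\<in>UNIV. christ g y l j m * X y m) i x"
    unfolding cov_comp_def
    by (rule pd_add) (use coord_smooth_pd[OF X] U in
        \<open>auto intro!: coord_smooth_differentiable_at differentiable_sum differentiable_mult Gd Xd\<close>)
  also have "pd (\<lambda>y. \<Sum>m\<in>UNIV. christ g y l j m * X y m) i x
      = (\<Sum>m\<in>UNIV. pd (\<lambda>y. christ g y l j m) i x * X x m + christ g x l j m * pd (\<lambda>y. X y m) i x)"
    by (simp add: pd_sum pd_mult Gd Xd differentiable_mult)
  finally show ?thesis .
qed

lemma ricci_identity:
  assumes g: "riem_metric U g" and U: "open U" "x \<in> U" and X: "\<And>k. coord_smooth U (\<lambda>y. X y k)"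
  shows "(\<Sum>k\<in>UNIV. riemann g x l i j k * X x k)
     = pd (\<lambda>y. cov_comp g X y j l) i x - pd (\<lambda>y. cov_comp g X y i l) j x
       + (\<Sum>m\<in>UNIV. christ g x l i m * cov_comp g X x j m - christ g x l j m * cov_comp g X x i m)"
proof -
  have "pd (pd (\<lambda>y. X y l) j) i x = pd (pd (\<lambda>y. X y l) i) j x"
    using X U by (rule coord_smooth_pd_pd_commute)
  moreover have "(\<Sum>k\<in>UNIV. \<Sum>n\<in>UNIV. X x k * (christ g x n a k * christ g x l b n))
      = (\<Sum>m\<in>UNIV. \<Sum>n\<in>UNIV. X x n * (christ g x m a n * christ g x l b m))" for a b
    by (rule sum.swap)
  ultimately show ?thesis
    unfolding pd_cov_comp[OF assms] unfolding riemann_def cov_comp_def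
    by (simp add: sum.distrib sum_subtractf sum_distrib_left sum_distrib_right algebra_simps)
qed

section \<open>Kenmotsu manifolds\<close>

lemma kenmotsu_regularity:
  assumes "kenmotsu U phi xi eta g"
  shows "riem_metric U g" "coord_smooth U (\<lambda>y. xi y k)" "coord_smooth U (\<lambda>y. eta y k)"
  using assms by (simp_all add: kenmotsu_def almost_contact_metric_def)

lemma kenmotsu_eta_xi:
  assumes "kenmotsu U phi xi eta g" "x \<in> U"
  shows "form1 (eta x) (vecf (xi x)) = 1"
  using assms by (simp add: kenmotsu_def almost_contact_metric_def)

lemma kenmotsu_xi_xi:
  assumes "kenmotsu U phi xi eta g" "x \<in> U"
  shows "bil (g x) (vecf (xi x)) (vecf (xi x)) = 1"
  using assms kenmotsu_eta_xi[OF assms] by (simp add: kenmotsu_def almost_contact_metric_def)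

lemma kenmotsu_metric_xi:
  assumes "kenmotsu U phi xi eta g" "x \<in> U"
  shows "(\<Sum>k\<in>UNIV. g x j k * xi x k) = eta x j"
proof -
  have "bil (g x) (axis j 1) (vecf (xi x)) = form1 (eta x) (axis j 1)"
    using assms by (simp add: kenmotsu_def almost_contact_metric_def)
  then show ?thesis by (simp add: bil_axis form1_axis vecf_def)
qed

lemma kenmotsu_cov_comp_xi:
  assumes "kenmotsu U phi xi eta g" "x \<in> U"
  shows "cov_comp g xi x i k = (if k = i then 1 else 0) - eta x i * xi x k"
proof -
  have "cov_vec g xi x (axis i 1) = axis i 1 - form1 (eta x) (axis i 1) *\<^sub>R vecf (xi x)"
    using assms by (simp add: kenmotsu_def)
  then have "cov_vec g xi x (axis i 1) $ k = (axis i 1 - form1 (eta x) (axis i 1) *\<^sub>R vecf (xi x)) $ k"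
    by simp
  then show ?thesis unfolding cov_vec_axis form1_axis by (simp add: vecf_def axis_def)
qed

lemma kenmotsu_lie_g_xi:
  assumes K: "kenmotsu U phi xi eta g" and U: "open U" "x \<in> U"
  shows "lie_g g xi x i j = 2 * g x i j - 2 * eta x i * eta x j"
proof -
  note g = kenmotsu_regularity(1)[OF K]
  have "lie_g g xi x i j = g x i j - eta x i * (\<Sum>k\<in>UNIV. g x j k * xi x k)
      + g x i j - eta x j * (\<Sum>k\<in>UNIV. g x i k * xi x k)"
    unfolding lie_g_cov_comp[OF g U] kenmotsu_cov_comp_xi[OF K U(2)] using riem_metric_sym[OF g U(2)]
    by (simp add: right_diff_distrib sum.distrib sum_subtractf sum_distrib_left mult_ac)
  then show ?thesis by (simp add: kenmotsu_metric_xi[OF K U(2)])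
qed

lemma kenmotsu_bil_lie_g_xi:
  assumes "kenmotsu U phi xi eta g" "open U" "x \<in> U"
  shows "bil (lie_g g xi x) v w = 2 * bil (g x) v w - 2 * (form1 (eta x) v * form1 (eta x) w)"
proof -
  have "lie_g g xi x = (\<lambda>i j. 2 * g x i j - 2 * (eta x i * eta x j))"
    by (simp add: fun_eq_iff kenmotsu_lie_g_xi[OF assms])
  then show ?thesis by (simp only: bil_lincomb_outer)
qed

lemma kenmotsu_curvature_xi:
  assumes K: "kenmotsu U phi xi eta g" and U: "open U" "x \<in> U"
  shows "(\<Sum>k\<in>UNIV. riemann g x l i j k * xi x k)
     = eta x i * (if l = j then 1 else 0) - eta x j * (if l = i then 1 else 0)
       - (pd (\<lambda>y. eta y j) i x - pd (\<lambda>y. eta y i) j x) * xi x l"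
proof -
  note g = kenmotsu_regularity(1)[OF K] and xi = kenmotsu_regularity(2)[OF K]
    and eta = kenmotsu_regularity(3)[OF K]
  have xid: "(\<lambda>y. xi y k) differentiable (at x)" for k
    using xi U by (rule coord_smooth_differentiable_at)
  have etad: "(\<lambda>y. eta y k) differentiable (at x)" for k
    using eta U by (rule coord_smooth_differentiable_at)
  have pd_cov_comp_xi: "pd (\<lambda>y. cov_comp g xi y b l) a x
      = - pd (\<lambda>y. eta y b) a x * xi x l - eta x b * pd (\<lambda>y. xi y l) a x" for a b
  proof -
    have "pd (\<lambda>y. cov_comp g xi y b l) a x = pd (\<lambda>y. (if l = b then 1 else 0) - eta y b * xi y l) a x"
      by (rule pd_cong_open[OF U]) (rule kenmotsu_cov_comp_xi[OF K])
    also have "\<dots> = - pd (\<lambda>y. eta y b * xi y l) a x"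
      by (simp add: pd_diff pd_const differentiable_mult etad xid)
    finally show ?thesis by (simp add: pd_mult etad xid)
  qed
  have pd_xi: "pd (\<lambda>y. xi y l) a x = (if l = a then 1 else 0) - eta x a * xi x l
      - (\<Sum>m\<in>UNIV. christ g x l a m * xi x m)" for a
    using kenmotsu_cov_comp_xi[OF K U(2), of a l] unfolding cov_comp_def by linarith
  have christ_cov_comp_xi: "(\<Sum>m\<in>UNIV. christ g x l a m * cov_comp g xi x b m)
      = christ g x l a b - eta x b * (\<Sum>m\<in>UNIV. christ g x l a m * xi x m)" for a b
    by (simp add: kenmotsu_cov_comp_xi[OF K U(2)] right_diff_distrib sum_subtractf sum_distrib_left
        algebra_simps)
  show ?thesis
    unfolding ricci_identity[OF g U xi] pd_cov_comp_xi sum_subtractf christ_cov_comp_xi pd_xi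
    using christ_sym[OF g U, of l i j] by (simp add: algebra_simps)
qed

lemma kenmotsu_ricci_xi_xi:
  fixes g :: "real^'m \<Rightarrow> 'm \<Rightarrow> 'm \<Rightarrow> real"
  assumes K: "kenmotsu U phi xi eta g" and U: "open U" "x \<in> U"
  shows "bil (ricci g x) (vecf (xi x)) (vecf (xi x)) = 1 - real CARD('m)"
proof -
  define A where "A j a = pd (\<lambda>y. eta y j) a x" for j a
  have trace: "(\<Sum>a\<in>UNIV. \<Sum>k\<in>UNIV. riemann g x a a j k * xi x k)
      = eta x j - real CARD('m) * eta x j - (\<Sum>a\<in>UNIV. (A j a - A a j) * xi x a)" for j
    unfolding kenmotsu_curvature_xi[OF K U] A_def by (simp add: sum_subtractf)
  have "bil (ricci g x) (vecf (xi x)) (vecf (xi x))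
      = (\<Sum>j\<in>UNIV. xi x j * (\<Sum>k\<in>UNIV. \<Sum>a\<in>UNIV. riemann g x a a j k * xi x k))"
    unfolding bil_def ricci_def vecf_def by (simp add: sum_distrib_left sum_distrib_right algebra_simps)
  also have "\<dots> = (\<Sum>j\<in>UNIV. xi x j * (\<Sum>a\<in>UNIV. \<Sum>k\<in>UNIV. riemann g x a a j k * xi x k))"
    by (subst sum.swap) (rule refl)
  also have "\<dots> = (\<Sum>j\<in>UNIV. eta x j * xi x j - real CARD('m) * (eta x j * xi x j)
      - (\<Sum>a\<in>UNIV. (A j a - A a j) * xi x j * xi x a))"
    unfolding trace by (simp add: right_diff_distrib sum_distrib_left mult_ac)
  also have "\<dots> = (\<Sum>j\<in>UNIV. eta x j * xi x j) - real CARD('m) * (\<Sum>j\<in>UNIV. eta x j * xi x j)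
      - (\<Sum>j\<in>UNIV. \<Sum>a\<in>UNIV. (A j a - A a j) * xi x j * xi x a)"
    by (simp add: sum_subtractf sum_distrib_left)
  also have "\<dots> = 1 - real CARD('m)"
    using kenmotsu_eta_xi[OF K U(2)] by (simp add: sum_antisym_quadratic form1_def vecf_def)
  finally show ?thesis .
qed

theorem theorem3p1:
  fixes U :: "(real^'m) set" and n :: nat
    and g :: "real^'m \<Rightarrow> 'm \<Rightarrow> 'm \<Rightarrow> real" and phi :: "real^'m \<Rightarrow> 'm \<Rightarrow> 'm \<Rightarrow> real"
    and xi :: "real^'m \<Rightarrow> 'm \<Rightarrow> real" and eta :: "real^'m \<Rightarrow> 'm \<Rightarrow> real"
    and p :: "real^'m \<Rightarrow> real" and lam mu :: real
  assumes dim: "CARD('m) = 2 * n + 1"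
    and U: "open U"
    and K: "kenmotsu U phi xi eta g"
    and soliton: "\<forall>x\<in>U. \<forall>v w.
        bil (lie_g g xi x) v w + 2 * bil (ricci g x) v w
        + (2 * lam - scal g x + (p x + 2 / real (2 * n + 1))) * bil (g x) v w
        + 2 * mu * form1 (eta x) v * form1 (eta x) w = 0"
  shows "eta_einstein U eta g \<and>
         (\<forall>x\<in>U. scal g x = (p x + 2 / real (2 * n + 1)) - 4 * real n + 2 * lam + 2 * mu)"
proof
  define c where "c x = 2 * lam - scal g x + (p x + 2 / real (2 * n + 1))" for x
  have soliton_x: "2 * bil (g x) v w - 2 * (form1 (eta x) v * form1 (eta x) w) + 2 * bil (ricci g x) v w
      + c x * bil (g x) v w + 2 * mu * (form1 (eta x) v * form1 (eta x) w) = 0" if "x \<in> U" for x v w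
    using soliton[rule_format, OF that, of v w]
    unfolding kenmotsu_bil_lie_g_xi[OF K U that] c_def by (simp add: mult.assoc)
  have "bil (ricci g x) v w = (- 1 - c x / 2) * bil (g x) v w + (1 - mu) * form1 (eta x) v * form1 (eta x) w"
    if "x \<in> U" for x v w
    using soliton_x[OF that, of v w] by (simp add: algebra_simps)
  then show "eta_einstein U eta g"
    unfolding eta_einstein_def
    by (intro exI[of _ "\<lambda>x. - 1 - c x / 2"] exI[of _ "\<lambda>_. 1 - mu"]) simp
  show "\<forall>x\<in>U. scal g x = (p x + 2 / real (2 * n + 1)) - 4 * real n + 2 * lam + 2 * mu"
  proof
    fix x assume x: "x \<in> U"
    from soliton_x[OF x, of "vecf (xi x)" "vecf (xi x)"]
    show "scal g x = (p x + 2 / real (2 * n + 1)) - 4 * real n + 2 * lam + 2 * mu"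
      by (simp add: kenmotsu_ricci_xi_xi[OF K U x] kenmotsu_xi_xi[OF K x] kenmotsu_eta_xi[OF K x]
          dim c_def)
  qed
qed

end
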